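(* Every simple graph $G$ satisfies $\zeta(G)\leqslant \chi_a(G)$.
   Context: All graphs are finite and simple. A broken cycle in $G$ is a subgraph $C-e$, where $C$ is a cycle of $G$ and $e$ is an edge of $C$. An edge coloring of $G$ is strongly woody if no broken cycle is monochromatic. The strong arboricity $\zeta(G)$ is the least number of colors in a strongly woody edge coloring of $G$. The acyclic chromatic number $\chi_a(G)$ is the least number of colors in a proper vertex coloring of $G$ in which no cycle receives only two colors. *)

theory Defs
  imports Main
begin

definition simple_graph :: "'a set \<Rightarrow> 'a set set \<Rightarrow> bool" where
  "simple_graph V E \<longleftrightarrow> finite V \<and>
     (\<forall>e\<in>E. \<exists>u v. u \<noteq> v \<and> u \<in> V \<and> v \<in> V \<and> e = {u, v})"

definition is_cycle :: "'a set set \<Rightarrow> 'a list \<Rightarrow> bool" where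
  "is_cycle E vs \<longleftrightarrow> length vs \<ge> 3 \<and> distinct vs \<and>
     (\<forall>i < length vs. {vs ! i, vs ! ((i + 1) mod length vs)} \<in> E)"

definition cycle_edges :: "'a list \<Rightarrow> 'a set set" where
  "cycle_edges vs = {{vs ! i, vs ! ((i + 1) mod length vs)} | i. i < length vs}"

definition strongly_woody :: "'a set set \<Rightarrow> ('a set \<Rightarrow> nat) \<Rightarrow> bool" where
  "strongly_woody E c \<longleftrightarrow>
     (\<forall>vs e. is_cycle E vs \<and> e \<in> cycle_edges vs \<longrightarrow>
        \<not> (\<exists>col. \<forall>f \<in> cycle_edges vs - {e}. c f = col))"

definition strong_arboricity :: "'a set \<Rightarrow> 'a set set \<Rightarrow> nat" where
  "strong_arboricity V E =
     (LEAST k. \<exists>c :: 'a set \<Rightarrow> nat. (\<forall>e\<in>E. c e < k) \<and> strongly_woody E c)"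

definition acyclic_coloring :: "'a set \<Rightarrow> 'a set set \<Rightarrow> ('a \<Rightarrow> nat) \<Rightarrow> nat \<Rightarrow> bool" where
  "acyclic_coloring V E c k \<longleftrightarrow>
     (\<forall>v\<in>V. c v < k) \<and>
     (\<forall>u v. {u, v} \<in> E \<longrightarrow> c u \<noteq> c v) \<and>
     (\<forall>vs. is_cycle E vs \<longrightarrow> card (c ` set vs) > 2)"

definition acyclic_chromatic_number :: "'a set \<Rightarrow> 'a set set \<Rightarrow> nat" where
  "acyclic_chromatic_number V E = (LEAST k. \<exists>c. acyclic_coloring V E c k)"

end

theory Submission
  imports Defs "HOL-Number_Theory.Cong"
begin

text \<open>Given an acyclic vertex colouring \<open>c\<close> with \<open>k\<close> colours, colour each edge \<open>{u, v}\<close> by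
  \<open>(c u + c v) mod k\<close>. Along a monochromatic path \<open>w0, w1, w2, ...\<close> the congruences
  \<open>c wt + c w(t+1) = c w(t+1) + c w(t+2) (mod k)\<close> force \<open>c wt = c w(t+2)\<close>, as all colours are
  below \<open>k\<close>; so the path uses only two vertex colours. A monochromatic broken cycle is such a
  path through all vertices of its cycle, which would then be 2-coloured, contradicting
  acyclicity.\<close>

lemma alternating_if_adjacent_sums_cong:
  fixes x :: "nat \<Rightarrow> nat"
  assumes sums: "\<And>t. Suc t < n \<Longrightarrow> (x t + x (Suc t)) mod k = s"
    and bounded: "\<And>t. t < n \<Longrightarrow> x t < k"
    and "t < n"
  shows "x t = x (t mod 2)"
  using \<open>t < n\<close>
proof (induction t rule: less_induct)
  case (less t)
  show ?case
  proof (cases "t < 2")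
    case True
    then show ?thesis by simp
  next
    case False
    then obtain u where t: "t = Suc (Suc u)"
      by (metis add_2_eq_Suc le_add_diff_inverse not_less)
    have "[x u + x (Suc u) = x (Suc (Suc u)) + x (Suc u)] (mod k)"
      using sums[of u] sums[of "Suc u"] less.prems t by (simp add: cong_def add.commute)
    then have "[x u = x t] (mod k)"
      using t by (simp only: cong_add_rcancel_nat)
    then have "x u = x t"
      using bounded less.prems t by (simp add: cong_def)
    then show ?thesis
      using less.IH[of u] less.prems t by simp
  qed
qed

lemma path_edge_ne_closing_edge:
  assumes "distinct ws" "length ws \<ge> 3" "Suc t < length ws"
  shows "{ws ! t, ws ! Suc t} \<noteq> {ws ! (length ws - 1), ws ! 0}"
proof
  have index_eq: "ws ! i = ws ! j \<longleftrightarrow> i = j" if "i < length ws" "j < length ws" for i j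
    using assms(1) that by (rule nth_eq_iff_index_eq)
  assume "{ws ! t, ws ! Suc t} = {ws ! (length ws - 1), ws ! 0}"
  then have "ws ! t = ws ! 0 \<and> ws ! Suc t = ws ! (length ws - 1)
      \<or> ws ! t = ws ! (length ws - 1) \<and> ws ! Suc t = ws ! 0"
    by (auto simp: doubleton_eq_iff)
  then show False
    using assms(2,3) index_eq[of t 0] index_eq[of "Suc t" "length ws - 1"]
      index_eq[of t "length ws - 1"] index_eq[of "Suc t" 0]
    by linarith
qed

text \<open>Rotating the cycle so that it starts right after the removed edge turns the broken cycle
  into a path along the list.\<close>

lemma broken_cycle_path:
  assumes cycle: "is_cycle E vs" and "e \<in> cycle_edges vs"
  obtains ws where "distinct ws" "set ws = set vs" "length ws = length vs"
    "\<And>t. Suc t < length ws \<Longrightarrow> {ws ! t, ws ! Suc t} \<in> cycle_edges vs - {e}"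
proof -
  let ?n = "length vs"
  obtain j where j: "j < ?n" "e = {vs ! j, vs ! (Suc j mod ?n)}"
    using \<open>e \<in> cycle_edges vs\<close> by (auto simp: cycle_edges_def)
  have n: "?n \<ge> 3" "distinct vs"
    using cycle by (auto simp: is_cycle_def)
  define ws where "ws = rotate (Suc j) vs"
  have ws: "distinct ws" "set ws = set vs" "length ws = ?n"
    using n by (simp_all add: ws_def)
  have ws_nth: "ws ! t = vs ! ((Suc j + t) mod ?n)" if "t < ?n" for t
    unfolding ws_def using that by (rule nth_rotate)
  have "Suc j + (?n - 1) = j + ?n"
    using n by simp
  then have "ws ! (?n - 1) = vs ! j"
    using n j by (simp add: ws_nth)
  moreover have "ws ! 0 = vs ! (Suc j mod ?n)"
    using ws_nth[of 0] n by (simp del: length_greater_0_conv)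
  ultimately have e_closing: "e = {ws ! (length ws - 1), ws ! 0}"
    using j ws(3) by (simp add: insert_commute)
  have "{ws ! t, ws ! Suc t} \<in> cycle_edges vs - {e}" if t: "Suc t < length ws" for t
  proof -
    let ?i = "(Suc j + t) mod ?n"
    have "ws ! Suc t = vs ! (Suc ?i mod ?n)"
      using t ws(3) by (simp add: ws_nth mod_Suc_eq)
    then have "{ws ! t, ws ! Suc t} = {vs ! ?i, vs ! (Suc ?i mod ?n)}"
      using t ws(3) by (simp add: ws_nth)
    moreover have "?i < ?n"
      using n(1) by (intro mod_less_divisor) linarith
    ultimately have "{ws ! t, ws ! Suc t} \<in> cycle_edges vs"
      unfolding cycle_edges_def by auto
    moreover have "{ws ! t, ws ! Suc t} \<noteq> e"
      unfolding e_closing using path_edge_ne_closing_edge[OF ws(1) _ t] n ws(3) by simp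
    ultimately show ?thesis
      by simp
  qed
  with ws that show ?thesis
    by blast
qed

lemma cycle_vertices_subset:
  assumes "simple_graph V E" "is_cycle E vs"
  shows "set vs \<subseteq> V"
proof
  fix v
  assume "v \<in> set vs"
  then obtain i where i: "i < length vs" "v = vs ! i"
    by (auto simp: in_set_conv_nth)
  then have "{v, vs ! (Suc i mod length vs)} \<in> E"
    using assms(2) by (simp add: is_cycle_def)
  then show "v \<in> V"
    using assms(1) by (auto simp: simple_graph_def doubleton_eq_iff)
qed

lemma strongly_woody_sum_mod_acyclic_coloring:
  assumes graph: "simple_graph V E" and acyclic: "acyclic_coloring V E c k"
  shows "strongly_woody E (\<lambda>e. (\<Sum>x\<in>e. c x) mod k)"
  unfolding strongly_woody_def
proof (intro allI impI notI)
  fix vs e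
  assume "is_cycle E vs \<and> e \<in> cycle_edges vs"
  then have cycle: "is_cycle E vs" and "e \<in> cycle_edges vs" by simp_all
  assume "\<exists>s. \<forall>f \<in> cycle_edges vs - {e}. (\<Sum>x\<in>f. c x) mod k = s"
  then obtain s where mono: "\<And>f. f \<in> cycle_edges vs - {e} \<Longrightarrow> (\<Sum>x\<in>f. c x) mod k = s"
    by blast
  obtain ws where ws: "distinct ws" "set ws = set vs" "length ws = length vs"
    and path: "\<And>t. Suc t < length ws \<Longrightarrow> {ws ! t, ws ! Suc t} \<in> cycle_edges vs - {e}"
    using broken_cycle_path[OF cycle \<open>e \<in> cycle_edges vs\<close>] by blast
  have bounded: "c (ws ! t) < k" if "t < length ws" for t
  proof -
    have "ws ! t \<in> V"
      using that ws(2) cycle_vertices_subset[OF graph cycle] nth_mem by blast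
    then show ?thesis
      using acyclic by (simp add: acyclic_coloring_def)
  qed
  have sums: "(c (ws ! t) + c (ws ! Suc t)) mod k = s" if "Suc t < length ws" for t
  proof -
    have "ws ! t \<noteq> ws ! Suc t"
      using that ws(1) by (simp add: nth_eq_iff_index_eq)
    then show ?thesis
      using mono[OF path[OF that]] by simp
  qed
  have "c ` set vs \<subseteq> {c (ws ! 0), c (ws ! 1)}"
  proof
    fix y
    assume "y \<in> c ` set vs"
    then obtain t where t: "t < length ws" "y = c (ws ! t)"
      using ws(2) by (metis imageE in_set_conv_nth)
    then have "y = c (ws ! (t mod 2))"
      using alternating_if_adjacent_sums_cong[where x = "\<lambda>t. c (ws ! t)", OF sums bounded t(1)]
      by simp
    then show "y \<in> {c (ws ! 0), c (ws ! 1)}"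
      by (cases "even t") (simp_all add: even_iff_mod_2_eq_zero odd_iff_mod_2_eq_one)
  qed
  then have "card (c ` set vs) \<le> card {c (ws ! 0), c (ws ! 1)}"
    by (simp add: card_mono)
  also have "\<dots> \<le> 2"
    by (simp add: card_insert_if)
  finally have "card (c ` set vs) \<le> 2" .
  moreover have "card (c ` set vs) > 2"
    using acyclic cycle by (simp add: acyclic_coloring_def)
  ultimately show False by simp
qed

lemma strong_arboricity_le_acyclic_coloring:
  assumes graph: "simple_graph V E" and acyclic: "acyclic_coloring V E c k"
  shows "strong_arboricity V E \<le> k"
proof -
  have bounded: "(\<Sum>x\<in>e. c x) mod k < k" if "e \<in> E" for e
  proof -
    obtain v where "v \<in> V"
      using graph \<open>e \<in> E\<close> unfolding simple_graph_def by blast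
    then have "k > 0"
      using acyclic by (auto simp: acyclic_coloring_def)
    then show ?thesis
      by simp
  qed
  show ?thesis
    unfolding strong_arboricity_def
  proof (rule Least_le, intro exI conjI)
    show "\<forall>e\<in>E. (\<Sum>x\<in>e. c x) mod k < k"
      using bounded by blast
    show "strongly_woody E (\<lambda>e. (\<Sum>x\<in>e. c x) mod k)"
      using graph acyclic by (rule strongly_woody_sum_mod_acyclic_coloring)
  qed
qed

lemma ex_acyclic_coloring_card:
  assumes graph: "simple_graph V E"
  shows "\<exists>c. acyclic_coloring V E c (card V)"
proof -
  obtain h where h: "bij_betw h V {0..<card V}"
    using graph ex_bij_betw_finite_nat by (auto simp: simple_graph_def)
  have "h v < card V" if "v \<in> V" for v
    using h that by (auto simp: bij_betw_def)
  moreover have "h u \<noteq> h v" if "{u, v} \<in> E" for u v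
  proof -
    have "u \<in> V" "v \<in> V" "u \<noteq> v"
      using graph that by (auto simp: simple_graph_def doubleton_eq_iff)
    then show ?thesis
      using h by (auto simp: bij_betw_def inj_on_def)
  qed
  moreover have "card (h ` set vs) > 2" if cycle: "is_cycle E vs" for vs
  proof -
    have "inj_on h (set vs)"
      using h cycle_vertices_subset[OF graph cycle] by (auto simp: bij_betw_def intro: inj_on_subset)
    then show ?thesis
      using cycle by (simp add: is_cycle_def card_image distinct_card)
  qed
  ultimately show ?thesis
    unfolding acyclic_coloring_def by blast
qed

theorem mainTheorem1:
  fixes V :: "'a set" and E :: "'a set set"
  assumes "simple_graph V E"
  shows "strong_arboricity V E \<le> acyclic_chromatic_number V E"
proof -
  obtain c where "acyclic_coloring V E c (acyclic_chromatic_number V E)"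
    using LeastI_ex[of "\<lambda>k. \<exists>c. acyclic_coloring V E c k"] ex_acyclic_coloring_card[OF assms]
    unfolding acyclic_chromatic_number_def by blast
  with assms show ?thesis
    by (rule strong_arboricity_le_acyclic_coloring)
qed

end
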